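(* Define rational functions of $\xi\in\mathbb C$ by $c_0=\frac1{\xi+10}$, $d_0=\frac{\xi+23}{(\xi+13)(\xi+10)}$, and for $j\ge1$, $v_j=(c_j,d_j)^T=N_jv_{j-1}$ with $$N_j=\begin{pmatrix}8j+10+\xi&0\\-13&8j+13+\xi\end{pmatrix}^{-1}\begin{pmatrix}8(j-1)&10\\0&8(j-1)\end{pmatrix}.$$ Let $\mathring c_0=\mathfrak F^{-1}(\frac{c_0}{d_0}-1)$, $\mathring d_0=0$, and $(\mathring c_j,\mathring d_j)=\mathfrak F^{-1}\big(\frac1{d_0}(c_j,d_j)\big)$ for $j\ge1$. Let $\mathring w_1,\mathring w_2$ solve on $[0,\infty)_t\times[0,\infty)_\gamma$ $$\partial_t\mathring w_1-4\gamma\partial_\gamma\mathring w_1+10\mathring w_1-\frac{10}{1+\gamma^2}\mathring w_2=130e^{-23t},\qquad \partial_t\mathring w_2-4\gamma\partial_\gamma\mathring w_2+13\mathring w_2-13\mathring w_1=130e^{-23t},$$ with $\mathring w_1(0)=-10\frac{\gamma^2}{1+\gamma^2}$, $\mathring w_2(0)=0$. Then each $\mathring c_k,\mathring d_k$ decays faster than $e^{-t}$ as $t\to\infty$, and for every integer $M\ge2$, with $A_M:=\sum_{j=1}^M\mathring c_j(t)(1+\gamma^2)^{-j}$, $B_M:=\sum_{j=1}^M\mathring d_j(t)(1+\gamma^2)^{-j}$, the errors $\alpha:=\mathring w_1-A_M$, $\beta:=\mathring w_2-B_M$ satisfy $$\partial_t\alpha-4\gamma\partial_\gamma\alpha+10\alpha-\frac{10}{1+\gamma^2}\beta=\frac{P_M(t)}{(1+\gamma^2)^{M+1}},\qquad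 \partial_t\beta-4\gamma\partial_\gamma\beta+13\beta-13\alpha=\frac{Q_M(t)}{(1+\gamma^2)^{M+1}},$$ where $P_M=8M\mathring c_M+10\mathring d_M$ and $Q_M=8M\mathring d_M$.
   Context: $\hat f(\xi)=\int_0^\infty e^{-\xi t}f(t)dt$ is the Laplace transform and $\mathfrak F^{-1}$ the inverse Laplace transform (applied componentwise). *)

theory Defs
  imports "HOL-Analysis.Analysis"
begin

text \<open>The inverse of the lower triangular matrix is written out
  as adjugate divided by determinant: (1/(a b)) [[b,0],[13,a]].\<close>

fun cdvec :: "nat \<Rightarrow> complex \<Rightarrow> complex \<times> complex" where
  "cdvec 0 \<xi> = (1 / (\<xi> + 10), (\<xi> + 23) / ((\<xi> + 13) * (\<xi> + 10)))"
| "cdvec (Suc j) \<xi> =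
     (let c = fst (cdvec j \<xi>); d = snd (cdvec j \<xi>);
          x = of_nat (8 * j) * c + 10 * d;
          y = of_nat (8 * j) * d;
          a = of_nat (8 * Suc j) + 10 + \<xi>;
          b = of_nat (8 * Suc j) + 13 + \<xi>
      in (b * x / (a * b), (13 * x + a * y) / (a * b)))"

definition cfun :: "nat \<Rightarrow> complex \<Rightarrow> complex" where
  "cfun j \<xi> = fst (cdvec j \<xi>)"

definition dfun :: "nat \<Rightarrow> complex \<Rightarrow> complex" where
  "dfun j \<xi> = snd (cdvec j \<xi>)"

text \<open>f (a continuous function on [0,oo)) is the inverse Laplace transform of R:
  for all xi in some right half-plane, the integral over [0,oo) of exp(-xi t) f(t)
  exists and equals R xi.  Continuity makes f unique (Lerch).\<close>

definition is_inverse_laplace :: "(real \<Rightarrow> real) \<Rightarrow> (complex \<Rightarrow> complex) \<Rightarrow> bool" where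
  "is_inverse_laplace f R \<longleftrightarrow>
     continuous_on {0..} f \<and>
     (\<exists>\<sigma>::real. \<forall>\<xi>::complex. \<sigma> < Re \<xi> \<longrightarrow>
        ((\<lambda>t. exp (- (\<xi> * of_real t)) * of_real (f t)) has_integral R \<xi>) {0..})"

end

theory Submission
  imports Defs
begin

(* Dividing the recursion v_j = N_j v_(j-1) by d_0 turns it into linear relations between
   the Laplace transforms of cr j and dr j, e.g. (xi + 8j + 10) c_j/d_0 = 8(j-1) c_(j-1)/d_0
   + 10 d_(j-1)/d_0. The Laplace transform is injective on continuous functions (Lerch's
   theorem, proved from the Weierstrass approximation theorem after the substitution
   x = e^-t), so these relations are equivalent to a triangular system of linear ODEs,
   with cr 0 = -10 e^(-23t). Duhamel's formula then gives cr j, dr j = O(e^(-2t)) by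
   induction on j. Finally, the transport operator d/dt - 4 gamma d/dgamma maps
   (1 + gamma^2)^-j to 8j ((1 + gamma^2)^-j - (1 + gamma^2)^-(j+1)), so along the ODEs
   the truncated series telescope and only the terms P_M, Q_M at j = M survive. *)

section \<open>Laplace transforms on the half-line\<close>

definition has_laplace :: "(real \<Rightarrow> real) \<Rightarrow> real \<Rightarrow> real \<Rightarrow> bool" where
  "has_laplace f x L \<longleftrightarrow> ((\<lambda>T. integral {0..T} (\<lambda>t. exp (- (x * t)) * f t)) \<longlongrightarrow> L) at_top"

lemma tendsto_exp_neg_mult_at_top:
  fixes d :: real
  assumes "d > 0"
  shows "((\<lambda>T. exp (- (d * T))) \<longlongrightarrow> 0) at_top"
proof -
  have "filterlim (\<lambda>T. - (d * T)) at_bot at_top"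
    using filterlim_tendsto_pos_mult_at_top[OF tendsto_const assms filterlim_ident]
    by (rule filterlim_compose[OF filterlim_uminus_at_bot_at_top])
  then show ?thesis
    by (rule filterlim_compose[OF exp_at_bot])
qed

lemma integrable_on_Icc_if_continuous_on_halfline:
  fixes g :: "real \<Rightarrow> real"
  assumes "continuous_on {0..} g"
  shows "g integrable_on {0..T}"
  by (rule integrable_continuous_interval, rule continuous_on_subset[OF assms]) auto

lemma has_integral_halfline_imp_tendsto:
  fixes f :: "real \<Rightarrow> real"
  assumes "(f has_integral I) {0..}"
  shows "((\<lambda>T. integral {0..T} f) \<longlongrightarrow> I) at_top"
proof (rule tendstoI)
  fix e :: real
  assume "e > 0"
  with assms[unfolded has_integral_alt'] obtain B where "B > 0" and B:
    "\<And>a b. ball 0 B \<subseteq> cbox a b \<Longrightarrow>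
       norm (integral (cbox a b) (\<lambda>x. if x \<in> {0..} then f x else 0) - I) < e"
    by blast
  have "dist (integral {0..T} f) I < e" if "T \<ge> B" for T
  proof -
    have "{0..} \<inter> cbox (- T) T = {0..T}"
      using that \<open>B > 0\<close> by auto
    then have "integral (cbox (- T) T) (\<lambda>x. if x \<in> {0..} then f x else 0) = integral {0..T} f"
      by (metis integral_restrict_Int)
    moreover have "ball 0 B \<subseteq> cbox (- T) T"
      using that by (auto simp: dist_real_def)
    ultimately show ?thesis
      using B[of "- T" T] by (simp add: dist_norm)
  qed
  then show "\<forall>\<^sub>F T in at_top. dist (integral {0..T} f) I < e"
    by (auto simp: eventually_at_top_linorder)
qed

lemma has_real_derivative_integral_halfline:
  fixes g :: "real \<Rightarrow> real"
  assumes "continuous_on {0..} g" and "t \<ge> 0"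
  shows "((\<lambda>s. integral {0..s} g) has_real_derivative g t) (at t within {0..})"
proof -
  have "continuous_on {0..t + 1} g"
    using assms(1) by (rule continuous_on_subset) auto
  moreover have "at t within {0..} = at t within {0..t + 1}"
    by (rule at_within_nhd[where S = "{..<t + 1}"]) auto
  ultimately show ?thesis
    using integral_has_real_derivative[of 0 "t + 1" g t] assms(2) by simp
qed

lemma continuous_on_integral_halfline:
  fixes g :: "real \<Rightarrow> real"
  assumes "continuous_on {0..} g"
  shows "continuous_on {0..} (\<lambda>s. integral {0..s} g)"
  unfolding continuous_on_eq_continuous_within
  using has_real_derivative_integral_halfline[OF assms] DERIV_continuous by (metis atLeast_iff)

lemma bounded_on_halfline_if_tendsto:
  fixes H :: "real \<Rightarrow> real"
  assumes "continuous_on {0..} H" and "(H \<longlongrightarrow> L) at_top"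
  obtains B where "\<And>t. t \<ge> 0 \<Longrightarrow> \<bar>H t\<bar> \<le> B"
proof -
  from assms(2) have "\<forall>\<^sub>F t in at_top. dist (H t) L < 1"
    by (rule tendstoD) simp
  then obtain T where T: "\<And>t. t \<ge> T \<Longrightarrow> dist (H t) L < 1"
    by (auto simp: eventually_at_top_linorder)
  have "compact (H ` {0..max T 0})"
    by (rule compact_continuous_image, rule continuous_on_subset[OF assms(1)]) auto
  then obtain B where B: "\<And>y. y \<in> H ` {0..max T 0} \<Longrightarrow> norm y \<le> B"
    using compact_imp_bounded bounded_iff by metis
  have "\<bar>H t\<bar> \<le> max B (\<bar>L\<bar> + 1)" if "t \<ge> 0" for t
  proof (cases "t \<le> max T 0")
    case True
    then show ?thesis using B[of "H t"] that by auto
  next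
    case False
    then have "dist (H t) L < 1"
      using T by auto
    then show ?thesis by (auto simp: dist_real_def)
  qed
  then show ?thesis using that by blast
qed

lemma has_integral_exp_neg_mult:
  fixes x T :: real
  assumes "x \<noteq> 0" and "T \<ge> 0"
  shows "((\<lambda>s. exp (- (x * s))) has_integral (1 - exp (- (x * T))) / x) {0..T}"
proof -
  have "((\<lambda>s. exp (- (x * s))) has_integral (- exp (- (x * T)) / x - (- exp (- (x * 0)) / x))) {0..T}"
  proof (rule fundamental_theorem_of_calculus[OF assms(2)])
    fix y
    have "((\<lambda>s. - exp (- (x * s)) / x) has_real_derivative exp (- (x * y))) (at y within {0..T})"
      using assms(1) by (auto intro!: derivative_eq_intros)
    then show "((\<lambda>s. - exp (- (x * s)) / x) has_vector_derivative exp (- (x * y))) (at y within {0..T})"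
      by (simp add: has_real_derivative_iff_has_vector_derivative)
  qed
  then show ?thesis
    by (simp add: diff_divide_distrib)
qed

lemma integral_exp_mult_by_parts:
  fixes v :: "real \<Rightarrow> real"
  assumes v: "continuous_on {0..} v" and "T \<ge> 0"
  shows "integral {0..T} (\<lambda>t. exp (- (c * t)) * v t) =
     exp (- (c * T)) * integral {0..T} v + c * integral {0..T} (\<lambda>t. exp (- (c * t)) * integral {0..t} v)"
proof -
  define V where "V s = integral {0..s} v" for s
  have cV: "continuous_on {0..} V"
    unfolding V_def by (rule continuous_on_integral_halfline[OF v])
  have "((\<lambda>s. exp (- (c * s)) * V s) has_vector_derivative
      (exp (- (c * x)) * v x - c * (exp (- (c * x)) * V x))) (at x within {0..T})"
    if "x \<in> {0..T}" for x
  proof -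
    have "((\<lambda>s. exp (- (c * s)) * V s) has_real_derivative
      (exp (- (c * x)) * v x - c * (exp (- (c * x)) * V x))) (at x within {0..})"
      unfolding V_def using that
      by (auto intro!: derivative_eq_intros has_real_derivative_integral_halfline[OF v]
          simp: algebra_simps)
    then show ?thesis
      by (auto simp: has_real_derivative_iff_has_vector_derivative intro: has_vector_derivative_within_subset)
  qed
  from fundamental_theorem_of_calculus[OF \<open>T \<ge> 0\<close> this]
  have "((\<lambda>x. exp (- (c * x)) * v x - c * (exp (- (c * x)) * V x)) has_integral exp (- (c * T)) * V T) {0..T}"
    by (simp add: V_def)
  moreover have "(\<lambda>x. exp (- (c * x)) * v x) integrable_on {0..T}"
    and "(\<lambda>x. c * (exp (- (c * x)) * V x)) integrable_on {0..T}"
    by (auto intro!: integrable_on_Icc_if_continuous_on_halfline continuous_intros v cV)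
  ultimately show ?thesis
    unfolding V_def[symmetric] using integral_diff by (fastforce dest: integral_unique)
qed

lemma has_laplace_add:
  assumes "has_laplace f x A" "has_laplace g x B" "continuous_on {0..} f" "continuous_on {0..} g"
  shows "has_laplace (\<lambda>t. f t + g t) x (A + B)"
proof -
  have "integral {0..T} (\<lambda>t. exp (- (x * t)) * (f t + g t)) =
      integral {0..T} (\<lambda>t. exp (- (x * t)) * f t) + integral {0..T} (\<lambda>t. exp (- (x * t)) * g t)" for T
    by (subst integral_add[symmetric])
      (auto intro!: integrable_on_Icc_if_continuous_on_halfline continuous_intros assms(3,4)
        simp: algebra_simps)
  then show ?thesis
    using assms(1,2) unfolding has_laplace_def by (simp add: tendsto_add)
qed

lemma has_laplace_cmult:
  assumes "has_laplace f x A"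
  shows "has_laplace (\<lambda>t. c * f t) x (c * A)"
proof -
  have "integral {0..T} (\<lambda>t. exp (- (x * t)) * (c * f t)) =
      c * integral {0..T} (\<lambda>t. exp (- (x * t)) * f t)" for T
    by (subst integral_mult_right[symmetric]) (simp add: algebra_simps)
  then show ?thesis
    using assms unfolding has_laplace_def by (simp add: tendsto_mult_left)
qed

lemma has_laplace_diff:
  assumes "has_laplace f x A" "has_laplace g x B" "continuous_on {0..} f" "continuous_on {0..} g"
  shows "has_laplace (\<lambda>t. f t - g t) x (A - B)"
  using has_laplace_add[OF assms(1) has_laplace_cmult[OF assms(2), of "- 1"] assms(3)]
    assms(4) by (simp add: continuous_on_minus)

lemma has_laplace_const:
  assumes "x > 0"
  shows "has_laplace (\<lambda>t. k) x (k / x)"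
proof -
  have "integral {0..T} (\<lambda>t. exp (- (x * t)) * k) = (1 - exp (- (x * T))) / x * k" if "T \<ge> 0" for T
    by (rule integral_unique[OF has_integral_mult_left[OF has_integral_exp_neg_mult]])
      (use assms that in auto)
  then have "\<forall>\<^sub>F T in at_top. (1 - exp (- (x * T))) / x * k = integral {0..T} (\<lambda>t. exp (- (x * t)) * k)"
    by (auto simp: eventually_at_top_linorder intro!: exI[of _ 0])
  moreover have "((\<lambda>T. (1 - exp (- (x * T))) / x * k) \<longlongrightarrow> (1 - 0) / x * k) at_top"
    using assms by (intro tendsto_intros tendsto_exp_neg_mult_at_top) auto
  ultimately show ?thesis
    unfolding has_laplace_def by (simp add: tendsto_cong)
qed

lemma has_laplace_exp_mult_iff:
  "has_laplace (\<lambda>t. exp (- (a * t)) * f t) x L \<longleftrightarrow> has_laplace f (x + a) L"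
proof -
  have "exp (- (x * t)) * (exp (- (a * t)) * f t) = exp (- ((x + a) * t)) * f t" for t
    by (simp add: mult_exp_exp ring_distribs mult.assoc[symmetric] add.commute)
  then show ?thesis
    by (simp only: has_laplace_def)
qed

lemma has_laplace_integral:
  fixes g :: "real \<Rightarrow> real"
  assumes cg: "continuous_on {0..} g" and "has_laplace g x L" and "x \<noteq> 0"
    and "((\<lambda>T. exp (- (x * T)) * integral {0..T} g) \<longlongrightarrow> 0) at_top"
  shows "has_laplace (\<lambda>s. integral {0..s} g) x (L / x)"
proof -
  have lim: "((\<lambda>T. (integral {0..T} (\<lambda>u. exp (- (x * u)) * g u) - exp (- (x * T)) * integral {0..T} g) / x)
      \<longlongrightarrow> (L - 0) / x) at_top"
    using assms(2-4) unfolding has_laplace_def by (intro tendsto_divide tendsto_diff tendsto_const)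
  have eq: "(integral {0..T} (\<lambda>u. exp (- (x * u)) * g u) - exp (- (x * T)) * integral {0..T} g) / x
      = integral {0..T} (\<lambda>u. exp (- (x * u)) * integral {0..u} g)" if "T \<ge> 0" for T
    unfolding integral_exp_mult_by_parts[OF cg that, of x] using \<open>x \<noteq> 0\<close> by simp
  have "\<forall>\<^sub>F T in at_top. (integral {0..T} (\<lambda>u. exp (- (x * u)) * g u)
      - exp (- (x * T)) * integral {0..T} g) / x = integral {0..T} (\<lambda>u. exp (- (x * u)) * integral {0..u} g)"
    unfolding eventually_at_top_linorder by (intro exI[of _ 0] allI impI eq)
  from Lim_transform_eventually[OF lim this] show ?thesis
    unfolding has_laplace_def by simp
qed

lemma is_inverse_laplace_imp_has_laplace:
  assumes "is_inverse_laplace f R"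
  shows "\<forall>\<^sub>F x in at_top. has_laplace f x (Re (R (of_real x)))"
proof -
  obtain \<sigma> :: real where \<sigma>: "\<And>\<xi>. \<sigma> < Re \<xi> \<Longrightarrow>
      ((\<lambda>t. exp (- (\<xi> * of_real t)) * of_real (f t)) has_integral R \<xi>) {0..}"
    using assms unfolding is_inverse_laplace_def by blast
  have "has_laplace f x (Re (R (of_real x)))" if "x > \<sigma>" for x
  proof -
    have re: "Re (exp (- (of_real x * of_real t)) * of_real (f t)) = exp (- (x * t)) * f t" for t
    proof -
      have "exp (- (of_real x * of_real t)) = complex_of_real (exp (- (x * t)))"
        by (simp flip: exp_of_real)
      then show ?thesis
        by simp
    qed
    have "((\<lambda>t. Re (exp (- (of_real x * of_real t)) * of_real (f t))) has_integral Re (R (of_real x))) {0..}"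
      using has_integral_linear[OF \<sigma>[of "of_real x"] bounded_linear_Re] that by (simp add: o_def)
    then have "((\<lambda>t. exp (- (x * t)) * f t) has_integral Re (R (of_real x))) {0..}"
      unfolding re .
    then show ?thesis
      unfolding has_laplace_def by (rule has_integral_halfline_imp_tendsto)
  qed
  with eventually_gt_at_top[of \<sigma>] show ?thesis
    by (rule eventually_mono)
qed

section \<open>Lerch's theorem\<close>

lemma continuous_on_comp_neg_ln:
  fixes H :: "real \<Rightarrow> real"
  assumes cH: "continuous_on {0..} H" and lim: "(H \<longlongrightarrow> 0) at_top"
  shows "continuous_on {0..1} (\<lambda>x. if x = 0 then 0 else H (- ln x))"
  unfolding continuous_on_eq_continuous_within
proof
  fix x :: real
  assume x: "x \<in> {0..1}"
  define \<phi> where "\<phi> = (\<lambda>x::real. if x = 0 then 0 else H (- ln x))"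
  show "continuous (at x within {0..1}) \<phi>"
  proof (cases "x = 0")
    case True
    have "filterlim (\<lambda>y. - ln y) at_top (at_right (0::real))"
      by (rule filterlim_compose[OF filterlim_uminus_at_top_at_bot ln_at_0])
    then have "((\<lambda>y. H (- ln y)) \<longlongrightarrow> 0) (at_right 0)"
      by (rule filterlim_compose[OF lim])
    moreover have "\<forall>\<^sub>F y in at_right 0. H (- ln y) = \<phi> y"
      using eventually_at_right_less[of "0::real"] by eventually_elim (simp add: \<phi>_def)
    ultimately have "(\<phi> \<longlongrightarrow> 0) (at_right 0)"
      by (rule Lim_transform_eventually)
    moreover have "at (0::real) within {0..1} \<le> at_right 0"
    proof -
      have "at (0::real) within {0..1} = at 0 within {0<..1}"
        by (rule at_within_nhd[where S = UNIV]) auto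
      also have "\<dots> \<le> at_right 0"
        by (rule at_le) auto
      finally show ?thesis .
    qed
    ultimately show ?thesis
      using True by (simp add: continuous_within \<phi>_def tendsto_mono)
  next
    case False
    have "continuous_on {0<..1} (\<lambda>x. H (- ln x))"
      by (rule continuous_on_compose2[OF cH]) (auto intro!: continuous_intros)
    then have "continuous_on {0<..1} \<phi>"
      by (rule continuous_on_cong[THEN iffD1, rotated 2]) (auto simp: \<phi>_def)
    moreover have "at x within {0..1} = at x within {0<..1}"
      by (rule at_within_nhd[where S = "{0<..}"]) (use x False in auto)
    ultimately show ?thesis
      using x False by (simp add: continuous_on_eq_continuous_within)
  qed
qed

lemma tendsto_integral_exp_poly_mult:
  fixes H :: "real \<Rightarrow> real"
  assumes cH: "continuous_on {0..} H" and mom: "\<And>n. has_laplace H (real (Suc n)) 0"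
  shows "((\<lambda>T. integral {0..T} (\<lambda>s. exp (- s) * (\<Sum>i\<le>n. a i * exp (- s) ^ i) * H s)) \<longlongrightarrow> 0) at_top"
proof -
  have "integral {0..T} (\<lambda>s. exp (- s) * (\<Sum>i\<le>n. a i * exp (- s) ^ i) * H s) =
      (\<Sum>i\<le>n. a i * integral {0..T} (\<lambda>s. exp (- (real (Suc i) * s)) * H s))" for T
  proof -
    have "exp (- s) * exp (- s) ^ i = exp (- (real (Suc i) * s))" for s and i :: nat
      by (simp add: exp_of_nat_mult[symmetric] exp_add[symmetric] algebra_simps)
    then have "(\<lambda>s. exp (- s) * (\<Sum>i\<le>n. a i * exp (- s) ^ i) * H s) =
        (\<lambda>s. \<Sum>i\<le>n. a i * (exp (- (real (Suc i) * s)) * H s))"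
      by (simp add: sum_distrib_left sum_distrib_right algebra_simps)
    moreover have "((\<lambda>s. \<Sum>i\<le>n. a i * (exp (- (real (Suc i) * s)) * H s)) has_integral
        (\<Sum>i\<le>n. a i * integral {0..T} (\<lambda>s. exp (- (real (Suc i) * s)) * H s))) {0..T}"
      by (intro has_integral_sum finite_atMost has_integral_mult_right integrable_integral
          integrable_on_Icc_if_continuous_on_halfline) (auto intro!: continuous_intros cH)
    ultimately show ?thesis
      by (simp add: integral_unique)
  qed
  moreover have "((\<lambda>T. \<Sum>i\<le>n. a i * integral {0..T} (\<lambda>s. exp (- (real (Suc i) * s)) * H s)) \<longlongrightarrow> 0) at_top"
    using mom unfolding has_laplace_def by (intro tendsto_null_sum tendsto_mult_right_zero)
  ultimately show ?thesis
    by simp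
qed

lemma integral_exp_mult_square_le_approx:
  fixes H p :: "real \<Rightarrow> real"
  assumes cH: "continuous_on {0..} H" and cp: "continuous_on {0..1} p"
    and B: "\<And>s. s \<ge> 0 \<Longrightarrow> \<bar>H s\<bar> \<le> B"
    and approx: "\<And>s. s \<ge> 0 \<Longrightarrow> \<bar>H s - p (exp (- s))\<bar> < \<epsilon>"
    and T: "T \<ge> max T\<^sub>0 0"
  shows "integral {0..T\<^sub>0} (\<lambda>s. exp (- s) * (H s)\<^sup>2)
    \<le> integral {0..T} (\<lambda>s. exp (- s) * p (exp (- s)) * H s) + B * \<epsilon>"
proof -
  have cpe: "continuous_on {0..} (\<lambda>s. p (exp (- s)))"
    by (rule continuous_on_compose2[OF cp]) (auto intro!: continuous_intros)
  have "integral {0..T\<^sub>0} (\<lambda>s. exp (- s) * (H s)\<^sup>2) \<le> integral {0..T} (\<lambda>s. exp (- s) * (H s)\<^sup>2)"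
    using T by (intro integral_subset_le integrable_on_Icc_if_continuous_on_halfline)
      (auto intro!: continuous_intros cH)
  also have "\<dots> = integral {0..T} (\<lambda>s. exp (- s) * p (exp (- s)) * H s)
      + integral {0..T} (\<lambda>s. exp (- s) * H s * (H s - p (exp (- s))))"
    unfolding power2_eq_square
    by (subst integral_add[symmetric])
      (auto simp: algebra_simps intro!: integrable_on_Icc_if_continuous_on_halfline
        continuous_intros cH cpe)
  also have "integral {0..T} (\<lambda>s. exp (- s) * H s * (H s - p (exp (- s))))
      \<le> integral {0..T} (\<lambda>s. B * \<epsilon> * exp (- s))"
  proof (rule integral_le)
    fix s
    assume "s \<in> {0..T}"
    have "H s * (H s - p (exp (- s))) \<le> \<bar>H s\<bar> * \<bar>H s - p (exp (- s))\<bar>"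
      by (metis abs_ge_self abs_mult)
    also have "\<dots> \<le> B * \<epsilon>"
      using B[of s] approx[of s] \<open>s \<in> {0..T}\<close> by (intro mult_mono) auto
    finally show "exp (- s) * H s * (H s - p (exp (- s))) \<le> B * \<epsilon> * exp (- s)"
      by (simp add: mult.assoc mult.commute[of "exp (- s)"])
  qed (auto intro!: integrable_on_Icc_if_continuous_on_halfline continuous_intros cH cpe)
  also have "\<dots> = B * \<epsilon> * (1 - exp (- T))"
    using has_integral_exp_neg_mult[of 1 T] T by (simp add: integral_unique)
  also have "\<dots> \<le> B * \<epsilon>"
    using B[of 0] approx[of 0] by (simp add: mult_left_le)
  finally show ?thesis
    by simp
qed

text \<open>Approximate \<open>x \<mapsto> H (- ln x)\<close> on \<open>[0, 1]\<close> by a polynomial \<open>p\<close> (Weierstrass); the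
  vanishing moments make the integrals of \<open>e\<^sup>-\<^sup>s p (e\<^sup>-\<^sup>s) H s\<close> tend to \<open>0\<close>.\<close>

lemma integral_exp_mult_square_le_if_exp_moments_vanish:
  fixes H :: "real \<Rightarrow> real"
  assumes cH: "continuous_on {0..} H" and lim: "(H \<longlongrightarrow> 0) at_top"
    and mom: "\<And>n. has_laplace H (real (Suc n)) 0"
    and B: "\<And>s. s \<ge> 0 \<Longrightarrow> \<bar>H s\<bar> \<le> B" and "\<epsilon> > 0"
  shows "integral {0..T\<^sub>0} (\<lambda>s. exp (- s) * (H s)\<^sup>2) \<le> B * \<epsilon>"
proof -
  obtain g where "real_polynomial_function g"
    and g: "\<And>x. x \<in> {0..1} \<Longrightarrow> \<bar>(if x = 0 then 0 else H (- ln x)) - g x\<bar> < \<epsilon>"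
    using Stone_Weierstrass_real_polynomial_function[OF compact_Icc
        continuous_on_comp_neg_ln[OF cH lim] \<open>\<epsilon> > 0\<close>] by blast
  then obtain a n where gs: "g = (\<lambda>x. \<Sum>i\<le>n. a i * x ^ i)"
    using real_polynomial_function_iff_sum by blast
  define I where "I T = integral {0..T} (\<lambda>s. exp (- s) * g (exp (- s)) * H s)" for T
  have "\<bar>H s - g (exp (- s))\<bar> < \<epsilon>" if "s \<ge> 0" for s
    using g[of "exp (- s)"] that by simp
  then have "integral {0..T\<^sub>0} (\<lambda>s. exp (- s) * (H s)\<^sup>2) \<le> I T + B * \<epsilon>" if "T \<ge> max T\<^sub>0 0" for T
    unfolding I_def using that
    by (intro integral_exp_mult_square_le_approx[OF cH _ B]) (auto simp: gs intro!: continuous_intros)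
  then have ev: "\<forall>\<^sub>F T in at_top. integral {0..T\<^sub>0} (\<lambda>s. exp (- s) * (H s)\<^sup>2) \<le> I T + B * \<epsilon>"
    unfolding eventually_at_top_linorder by blast
  have lim: "((\<lambda>T. I T + B * \<epsilon>) \<longlongrightarrow> 0 + B * \<epsilon>) at_top"
    unfolding I_def gs by (intro tendsto_add tendsto_integral_exp_poly_mult[OF cH mom] tendsto_const)
  show ?thesis
    using tendsto_lowerbound[OF lim ev trivial_limit_at_top_linorder] by simp
qed

lemma zero_if_exp_moments_vanish:
  fixes H :: "real \<Rightarrow> real"
  assumes cH: "continuous_on {0..} H" and lim: "(H \<longlongrightarrow> 0) at_top"
    and mom: "\<And>n. has_laplace H (real (Suc n)) 0" and "t \<ge> 0"
  shows "H t = 0"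
proof -
  obtain B where B: "\<And>s. s \<ge> 0 \<Longrightarrow> \<bar>H s\<bar> \<le> B"
    using bounded_on_halfline_if_tendsto[OF cH lim] by blast
  define q where "q s = exp (- s) * (H s)\<^sup>2" for s
  have cq: "continuous_on {0..t + 1} q"
    unfolding q_def by (auto intro!: continuous_intros continuous_on_subset[OF cH])
  have "integral {0..t + 1} q \<le> 0"
  proof (rule field_le_epsilon)
    fix \<epsilon> :: real
    assume "\<epsilon> > 0"
    then have "integral {0..t + 1} q \<le> B * (\<epsilon> / (\<bar>B\<bar> + 1))"
      unfolding q_def by (intro integral_exp_mult_square_le_if_exp_moments_vanish[OF cH lim mom B])
        auto
    also have "\<dots> \<le> \<epsilon>"
      using \<open>\<epsilon> > 0\<close> by (auto simp: field_simps abs_if intro: mult_right_mono)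
    finally show "integral {0..t + 1} q \<le> 0 + \<epsilon>"
      by simp
  qed
  moreover have "integral {0..t + 1} q \<ge> 0"
    using cq by (intro integral_nonneg integrable_continuous_interval) (auto simp: q_def)
  ultimately have "integral {0..t + 1} q = 0"
    by linarith
  moreover have "q integrable_on {0..t + 1}"
    using cq by (rule integrable_continuous_interval)
  ultimately have "(q has_integral 0) (cbox 0 (t + 1))"
    by (metis cbox_interval integrable_integral)
  then have "q t = 0"
    using cq \<open>t \<ge> 0\<close> by (intro has_integral_0_cbox_imp_0[of 0 "t + 1" q]) (auto simp: q_def)
  then show ?thesis
    by (simp add: q_def)
qed

text \<open>After the substitution \<open>H s = \<integral>\<^sub>0\<^sup>s e\<^sup>-\<^sup>x\<^sup>0\<^sup>u K u du\<close>, integration by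
  parts turns the vanishing of the transform of \<open>K\<close> at \<open>x\<^sub>0 + n\<close> into that of \<open>H\<close> at \<open>n\<close>.\<close>

lemma has_laplace_zero_imp_zero:
  fixes K :: "real \<Rightarrow> real"
  assumes cK: "continuous_on {0..} K" and "\<forall>\<^sub>F x in at_top. has_laplace K x 0" and t: "t \<ge> 0"
  shows "K t = 0"
proof -
  obtain x\<^sub>1 where hyp: "\<And>x. x \<ge> x\<^sub>1 \<Longrightarrow> has_laplace K x 0"
    using assms(2) unfolding eventually_at_top_linorder by blast
  define x\<^sub>0 where "x\<^sub>0 = max x\<^sub>1 0"
  define v where "v = (\<lambda>u. exp (- (x\<^sub>0 * u)) * K u)"
  define H where "H s = integral {0..s} v" for s
  have cv: "continuous_on {0..} v"
    unfolding v_def by (auto intro!: continuous_intros cK)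
  have cH: "continuous_on {0..} H"
    unfolding H_def by (rule continuous_on_integral_halfline[OF cv])
  have lim: "(H \<longlongrightarrow> 0) at_top"
    using hyp[of x\<^sub>0] unfolding has_laplace_def H_def v_def x\<^sub>0_def by simp
  have "has_laplace H (real (Suc n)) 0" for n
  proof -
    have "has_laplace v (real (Suc n)) 0"
      unfolding v_def has_laplace_exp_mult_iff by (rule hyp) (simp add: x\<^sub>0_def)
    moreover have "((\<lambda>T. exp (- (real (Suc n) * T)) * H T) \<longlongrightarrow> 0 * 0) at_top"
      by (intro tendsto_mult tendsto_exp_neg_mult_at_top lim) simp
    ultimately show ?thesis
      using has_laplace_integral[OF cv, of "real (Suc n)" 0] unfolding H_def by simp
  qed
  then have "H s = 0" if "s \<ge> 0" for s
    using zero_if_exp_moments_vanish[OF cH lim _ that] by blast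
  then have "(H has_real_derivative 0) (at t within {0..})"
    using t by (intro has_field_derivative_transform_within[OF DERIV_const zero_less_one]) auto
  moreover have "(H has_real_derivative v t) (at t within {0..})"
    unfolding H_def by (rule has_real_derivative_integral_halfline[OF cv t])
  moreover have "at t within {0..} \<noteq> bot"
  proof -
    have "at_right t \<le> at t within {0..}"
      using t by (intro at_le) auto
    then show ?thesis
      by (metis bot.extremum_unique trivial_limit_at_right_real)
  qed
  ultimately have "0 = v t"
    by (rule has_field_derivative_unique)
  then show ?thesis
    by (simp add: v_def)
qed

section \<open>Linear differential equations\<close>

lemma linear_ode_variation_of_constants:
  fixes f r :: "real \<Rightarrow> real"
  assumes d: "\<And>t. t \<ge> 0 \<Longrightarrow> (f has_real_derivative (r t - a * f t)) (at t within {0..})"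
    and "t \<ge> 0"
  shows "((\<lambda>s. exp (a * s) * r s) has_integral (exp (a * t) * f t - f 0)) {0..t}"
proof -
  have "((\<lambda>s. exp (a * s) * f s) has_vector_derivative exp (a * y) * r y) (at y within {0..t})"
    if "y \<in> {0..t}" for y
  proof -
    have "((\<lambda>s. exp (a * s) * f s) has_real_derivative exp (a * y) * r y) (at y within {0..})"
      using that by (auto intro!: derivative_eq_intros d simp: algebra_simps)
    then show ?thesis
      by (auto simp: has_real_derivative_iff_has_vector_derivative
          intro: has_vector_derivative_within_subset)
  qed
  from fundamental_theorem_of_calculus[OF \<open>t \<ge> 0\<close> this] show ?thesis
    by simp
qed

lemma linear_ode_homogeneous_solution:
  fixes f :: "real \<Rightarrow> real"
  assumes "\<And>t. t \<ge> 0 \<Longrightarrow> (f has_real_derivative (0 - a * f t)) (at t within {0..})"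
    and "t \<ge> 0"
  shows "f t = f 0 * exp (- (a * t))"
proof -
  have "((\<lambda>s. exp (a * s) * 0) has_integral (exp (a * t) * f t - f 0)) {0..t}"
    using linear_ode_variation_of_constants[where r = "\<lambda>_. 0"] assms by blast
  then have "exp (a * t) * f t = f 0"
    by (simp add: has_integral_0_eq)
  then show ?thesis
    by (metis exp_minus_inverse mult.assoc mult.commute mult_1)
qed

definition exp_bounded :: "real \<Rightarrow> (real \<Rightarrow> real) \<Rightarrow> bool" where
  "exp_bounded b f \<longleftrightarrow> (\<exists>C. \<forall>t\<ge>0. \<bar>f t\<bar> \<le> C * exp (- (b * t)))"

lemma exp_bounded_add:
  assumes "exp_bounded b f" and "exp_bounded b g"
  shows "exp_bounded b (\<lambda>t. f t + g t)"
proof -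
  obtain C D where "\<And>t. t \<ge> 0 \<Longrightarrow> \<bar>f t\<bar> \<le> C * exp (- (b * t))"
    and "\<And>t. t \<ge> 0 \<Longrightarrow> \<bar>g t\<bar> \<le> D * exp (- (b * t))"
    using assms unfolding exp_bounded_def by blast
  then have "\<bar>f t + g t\<bar> \<le> (C + D) * exp (- (b * t))" if "t \<ge> 0" for t
    using that abs_triangle_ineq[of "f t" "g t"] by (fastforce simp: distrib_right)
  then show ?thesis
    unfolding exp_bounded_def by blast
qed

lemma exp_bounded_cmult:
  assumes "exp_bounded b f"
  shows "exp_bounded b (\<lambda>t. c * f t)"
proof -
  obtain C where "\<And>t. t \<ge> 0 \<Longrightarrow> \<bar>f t\<bar> \<le> C * exp (- (b * t))"
    using assms unfolding exp_bounded_def by blast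
  then have "\<bar>c * f t\<bar> \<le> (\<bar>c\<bar> * C) * exp (- (b * t))" if "t \<ge> 0" for t
    using that by (simp add: abs_mult mult.assoc mult_left_mono)
  then show ?thesis
    unfolding exp_bounded_def by blast
qed

lemma tendsto_mult_exp_if_exp_bounded:
  assumes "exp_bounded b f" and "b > 1"
  shows "((\<lambda>t. f t * exp t) \<longlongrightarrow> 0) at_top"
proof -
  obtain C where C: "\<And>t. t \<ge> 0 \<Longrightarrow> \<bar>f t\<bar> \<le> C * exp (- (b * t))"
    using assms unfolding exp_bounded_def by blast
  have "\<bar>f t\<bar> * exp t \<le> C * exp (- ((b - 1) * t))" if "t \<ge> 0" for t
    using mult_right_mono[OF C[OF that], of "exp t"] by (simp add: mult.assoc algebra_simps flip: exp_add)
  then have "\<forall>\<^sub>F t in at_top. norm (f t * exp t) \<le> C * exp (- ((b - 1) * t))"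
    by (auto simp: eventually_at_top_linorder abs_mult intro!: exI[of _ 0])
  moreover have "((\<lambda>t. C * exp (- ((b - 1) * t))) \<longlongrightarrow> 0) at_top"
    using assms(2) by (intro tendsto_mult_right_zero tendsto_exp_neg_mult_at_top) simp
  ultimately show ?thesis
    by (rule Lim_null_comparison)
qed

lemma linear_ode_abs_le:
  fixes f r :: "real \<Rightarrow> real"
  assumes d: "\<And>t. t \<ge> 0 \<Longrightarrow> (f has_real_derivative (r t - a * f t)) (at t within {0..})"
    and "a > b" and r: "\<And>t. t \<ge> 0 \<Longrightarrow> \<bar>r t\<bar> \<le> C * exp (- (b * t))" and "t \<ge> 0"
  shows "\<bar>f t\<bar> \<le> (\<bar>f 0\<bar> + C / (a - b)) * exp (- (b * t))"
proof -
  have "C \<ge> 0"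
    using r[of 0] by simp
  have hi: "((\<lambda>s. exp (a * s) * r s) has_integral (exp (a * t) * f t - f 0)) {0..t}"
    by (rule linear_ode_variation_of_constants[OF d \<open>t \<ge> 0\<close>])
  have "norm (integral {0..t} (\<lambda>s. exp (a * s) * r s)) \<le> integral {0..t} (\<lambda>s. C * exp (- ((b - a) * s)))"
  proof (rule integral_norm_bound_integral)
    show "(\<lambda>s. exp (a * s) * r s) integrable_on {0..t}"
      using hi by blast
    show "(\<lambda>s. C * exp (- ((b - a) * s))) integrable_on {0..t}"
      by (intro integrable_continuous_interval continuous_intros)
    fix s
    assume "s \<in> {0..t}"
    then show "norm (exp (a * s) * r s) \<le> C * exp (- ((b - a) * s))"
      using mult_left_mono[OF r[of s], of "exp (a * s)"]
      by (simp add: abs_mult mult_exp_exp algebra_simps)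
  qed
  also have "\<dots> = C * (exp ((a - b) * t) - 1) / (a - b)"
    using has_integral_exp_neg_mult[of "b - a" t] \<open>a > b\<close> \<open>t \<ge> 0\<close>
    by (simp add: integral_unique field_simps)
  also have "\<dots> \<le> C / (a - b) * exp ((a - b) * t)"
    using \<open>C \<ge> 0\<close> \<open>a > b\<close> by (simp add: field_simps mult_left_mono)
  finally have "\<bar>exp (a * t) * f t - f 0\<bar> \<le> C / (a - b) * exp ((a - b) * t)"
    using integral_unique[OF hi] by simp
  then have "\<bar>exp (a * t) * f t\<bar> \<le> \<bar>f 0\<bar> + C / (a - b) * exp ((a - b) * t)"
    by arith
  then have "exp (- (a * t)) * \<bar>exp (a * t) * f t\<bar>
      \<le> exp (- (a * t)) * (\<bar>f 0\<bar> + C / (a - b) * exp ((a - b) * t))"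
    by (rule mult_left_mono) simp
  also have "exp (- (a * t)) * \<bar>exp (a * t) * f t\<bar> = \<bar>f t\<bar>"
    by (simp add: abs_mult mult.assoc[symmetric] flip: exp_add)
  also have "exp (- (a * t)) * (\<bar>f 0\<bar> + C / (a - b) * exp ((a - b) * t))
      = \<bar>f 0\<bar> * exp (- (a * t)) + C / (a - b) * exp (- (b * t))"
    by (simp add: algebra_simps flip: exp_add)
  also have "\<dots> \<le> (\<bar>f 0\<bar> + C / (a - b)) * exp (- (b * t))"
    using \<open>a > b\<close> \<open>t \<ge> 0\<close> by (simp add: distrib_right mult_left_mono mult_right_mono)
  finally show ?thesis .
qed

lemma linear_ode_exp_bounded:
  fixes f r :: "real \<Rightarrow> real"
  assumes d: "\<And>t. t \<ge> 0 \<Longrightarrow> (f has_real_derivative (r t - a * f t)) (at t within {0..})"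
    and "a > b" and "exp_bounded b r"
  shows "exp_bounded b f"
proof -
  obtain C where "\<And>t. t \<ge> 0 \<Longrightarrow> \<bar>r t\<bar> \<le> C * exp (- (b * t))"
    using assms(3) unfolding exp_bounded_def by blast
  from linear_ode_abs_le[OF d \<open>a > b\<close> this] show ?thesis
    unfolding exp_bounded_def by blast
qed

lemma abs_integral_le_exp_if_has_laplace:
  fixes g :: "real \<Rightarrow> real"
  assumes cg: "continuous_on {0..} g" and "has_laplace g x\<^sub>1 L" and "x\<^sub>1 > 0"
  obtains C where "\<And>T. T \<ge> 0 \<Longrightarrow> \<bar>integral {0..T} g\<bar> \<le> C * exp (x\<^sub>1 * T)"
proof -
  define v where "v u = exp (- (x\<^sub>1 * u)) * g u" for u
  define H where "H s = integral {0..s} v" for s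
  have cv: "continuous_on {0..} v"
    unfolding v_def by (auto intro!: continuous_intros cg)
  have cH: "continuous_on {0..} H"
    unfolding H_def by (rule continuous_on_integral_halfline[OF cv])
  have "(H \<longlongrightarrow> L) at_top"
    using assms(2) unfolding has_laplace_def H_def v_def .
  then obtain B where B: "\<And>s. s \<ge> 0 \<Longrightarrow> \<bar>H s\<bar> \<le> B"
    using bounded_on_halfline_if_tendsto[OF cH] by blast
  have "\<bar>integral {0..T} g\<bar> \<le> 2 * B * exp (x\<^sub>1 * T)" if T: "T \<ge> 0" for T
  proof -
    have "exp (- (- x\<^sub>1 * t)) * v t = g t" for t
      by (simp add: v_def mult.assoc[symmetric] flip: exp_add)
    then have "integral {0..T} g = exp (x\<^sub>1 * T) * H T - x\<^sub>1 * integral {0..T} (\<lambda>u. exp (x\<^sub>1 * u) * H u)"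
      using integral_exp_mult_by_parts[OF cv T, of "- x\<^sub>1"] by (simp add: H_def)
    then have "\<bar>integral {0..T} g\<bar>
        \<le> \<bar>exp (x\<^sub>1 * T) * H T\<bar> + \<bar>x\<^sub>1 * integral {0..T} (\<lambda>u. exp (x\<^sub>1 * u) * H u)\<bar>"
      by (simp only: abs_triangle_ineq4)
    moreover have "\<bar>exp (x\<^sub>1 * T) * H T\<bar> \<le> B * exp (x\<^sub>1 * T)"
      using B[OF T] by (simp add: abs_mult mult.commute)
    moreover have "\<bar>x\<^sub>1 * integral {0..T} (\<lambda>u. exp (x\<^sub>1 * u) * H u)\<bar>
        \<le> integral {0..T} (\<lambda>u. B * (x\<^sub>1 * exp (x\<^sub>1 * u)))"
    proof -
      have "norm (integral {0..T} (\<lambda>u. x\<^sub>1 * (exp (x\<^sub>1 * u) * H u)))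
          \<le> integral {0..T} (\<lambda>u. B * (x\<^sub>1 * exp (x\<^sub>1 * u)))"
      proof (rule integral_norm_bound_integral)
        fix u
        assume "u \<in> {0..T}"
        then show "norm (x\<^sub>1 * (exp (x\<^sub>1 * u) * H u)) \<le> B * (x\<^sub>1 * exp (x\<^sub>1 * u))"
          using B[of u] \<open>x\<^sub>1 > 0\<close> by (simp add: abs_mult mult_left_mono mult.commute mult.left_commute)
      qed (auto intro!: integrable_on_Icc_if_continuous_on_halfline continuous_intros cH)
      then show ?thesis
        by simp
    qed
    moreover have "integral {0..T} (\<lambda>u. B * (x\<^sub>1 * exp (x\<^sub>1 * u))) = B * exp (x\<^sub>1 * T) - B"
    proof -
      have "x\<^sub>1 \<noteq> 0"
        using \<open>x\<^sub>1 > 0\<close> by simp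
      have "integral {0..T} (\<lambda>u. exp (x\<^sub>1 * u)) = (1 - exp (x\<^sub>1 * T)) / - x\<^sub>1"
        using integral_unique[OF has_integral_exp_neg_mult[of "- x\<^sub>1" T]] \<open>x\<^sub>1 \<noteq> 0\<close> T by simp
      then have "integral {0..T} (\<lambda>u. B * (x\<^sub>1 * exp (x\<^sub>1 * u))) = B * (x\<^sub>1 * ((1 - exp (x\<^sub>1 * T)) / - x\<^sub>1))"
        by simp
      also have "x\<^sub>1 * ((1 - exp (x\<^sub>1 * T)) / - x\<^sub>1) = exp (x\<^sub>1 * T) - 1"
        using \<open>x\<^sub>1 \<noteq> 0\<close> by (simp add: field_simps)
      finally show ?thesis
        by (simp add: algebra_simps)
    qed
    moreover have "B \<ge> 0"
      using B[of 0] by simp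
    ultimately show ?thesis
      by linarith
  qed
  then show ?thesis
    using that by blast
qed

lemma tendsto_exp_mult_integral_if_has_laplace:
  fixes g :: "real \<Rightarrow> real"
  assumes cg: "continuous_on {0..} g" and "has_laplace g x\<^sub>1 L" and "x\<^sub>1 > 0" and "x > x\<^sub>1"
  shows "((\<lambda>T. exp (- (x * T)) * integral {0..T} g) \<longlongrightarrow> 0) at_top"
proof -
  obtain C where bound: "\<And>T. T \<ge> 0 \<Longrightarrow> \<bar>integral {0..T} g\<bar> \<le> C * exp (x\<^sub>1 * T)"
    using abs_integral_le_exp_if_has_laplace[OF assms(1-3)] by blast
  have "norm (exp (- (x * T)) * integral {0..T} g) \<le> C * exp (- ((x - x\<^sub>1) * T))" if "T \<ge> 0" for T
  proof -
    have "norm (exp (- (x * T)) * integral {0..T} g) \<le> exp (- (x * T)) * (C * exp (x\<^sub>1 * T))"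
      using bound[OF that] by (simp add: abs_mult)
    also have "\<dots> = C * exp (- ((x - x\<^sub>1) * T))"
      by (simp add: left_diff_distrib flip: exp_add)
    finally show ?thesis .
  qed
  then have "\<forall>\<^sub>F T in at_top. norm (exp (- (x * T)) * integral {0..T} g) \<le> C * exp (- ((x - x\<^sub>1) * T))"
    unfolding eventually_at_top_linorder by (intro exI[of _ 0] allI impI)
  moreover have "((\<lambda>T. C * exp (- ((x - x\<^sub>1) * T))) \<longlongrightarrow> 0) at_top"
    using \<open>x > x\<^sub>1\<close> by (intro tendsto_mult_right_zero tendsto_exp_neg_mult_at_top) simp
  ultimately show ?thesis
    by (rule Lim_null_comparison)
qed

lemma laplace_relation_imp_integral_equation:
  fixes f r :: "real \<Rightarrow> real"
  assumes cf: "continuous_on {0..} f" and cr: "continuous_on {0..} r"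
    and hyp: "\<forall>\<^sub>F x in at_top. has_laplace f x (F x) \<and> has_laplace r x (R x) \<and> (x + a) * F x = R x + \<kappa>"
    and "t \<ge> 0"
  shows "f t = \<kappa> + integral {0..t} (\<lambda>s. r s - a * f s)"
proof -
  define g where "g = (\<lambda>s. r s - a * f s)"
  define V where "V s = integral {0..s} g" for s
  have cg: "continuous_on {0..} g"
    unfolding g_def by (auto intro!: continuous_intros cf cr)
  have cV: "continuous_on {0..} V"
    unfolding V_def by (rule continuous_on_integral_halfline[OF cg])
  obtain x\<^sub>1 where hyp\<^sub>1: "\<And>x. x \<ge> x\<^sub>1 \<Longrightarrow> has_laplace f x (F x) \<and> has_laplace r x (R x) \<and> (x + a) * F x = R x + \<kappa>"
    using hyp unfolding eventually_at_top_linorder by blast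
  define x\<^sub>0 where "x\<^sub>0 = max x\<^sub>1 1"
  have "x\<^sub>0 > 0" and hyp: "\<And>x. x \<ge> x\<^sub>0 \<Longrightarrow> has_laplace f x (F x) \<and> has_laplace r x (R x) \<and> (x + a) * F x = R x + \<kappa>"
    using hyp\<^sub>1 by (auto simp: x\<^sub>0_def)
  have Lg: "has_laplace g x (R x - a * F x)" if "x \<ge> x\<^sub>0" for x
    unfolding g_def using hyp[OF that] by (intro has_laplace_diff has_laplace_cmult cf cr continuous_intros) auto
  have "has_laplace (\<lambda>s. f s - \<kappa> - V s) x 0" if "x \<ge> x\<^sub>0 + 1" for x
  proof -
    have "((\<lambda>T. exp (- (x * T)) * V T) \<longlongrightarrow> 0) at_top"
      unfolding V_def using that \<open>x\<^sub>0 > 0\<close>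
      by (intro tendsto_exp_mult_integral_if_has_laplace[OF cg Lg[of x\<^sub>0]]) auto
    then have "has_laplace V x ((R x - a * F x) / x)"
      unfolding V_def using that \<open>x\<^sub>0 > 0\<close> by (intro has_laplace_integral[OF cg Lg]) auto
    then have "has_laplace (\<lambda>s. f s - \<kappa> - V s) x (F x - \<kappa> / x - (R x - a * F x) / x)"
      using hyp[of x] has_laplace_const[of x \<kappa>] that \<open>x\<^sub>0 > 0\<close>
      by (intro has_laplace_diff cf cV continuous_intros) auto
    moreover have "F x - \<kappa> / x - (R x - a * F x) / x = ((x + a) * F x - R x - \<kappa>) / x"
      using that \<open>x\<^sub>0 > 0\<close> by (simp add: field_simps)
    moreover have "(x + a) * F x - R x - \<kappa> = 0"
      using hyp[of x] that \<open>x\<^sub>0 > 0\<close> by simp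
    ultimately show ?thesis
      by simp
  qed
  then have "\<forall>\<^sub>F x in at_top. has_laplace (\<lambda>s. f s - \<kappa> - V s) x 0"
    unfolding eventually_at_top_linorder by blast
  then have "f t - \<kappa> - V t = 0"
    by (rule has_laplace_zero_imp_zero[OF _ _ \<open>t \<ge> 0\<close>, rotated])
      (intro continuous_intros cf cV)
  then show ?thesis
    by (simp add: V_def g_def)
qed

lemma laplace_relation_imp_linear_ode:
  fixes f r :: "real \<Rightarrow> real"
  assumes cf: "continuous_on {0..} f" and cr: "continuous_on {0..} r"
    and hyp: "\<forall>\<^sub>F x in at_top. has_laplace f x (F x) \<and> has_laplace r x (R x) \<and> (x + a) * F x = R x + \<kappa>"
  shows "f 0 = \<kappa>"
    and "\<And>t. t \<ge> 0 \<Longrightarrow> (f has_real_derivative (r t - a * f t)) (at t within {0..})"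
proof -
  note eq = laplace_relation_imp_integral_equation[OF cf cr hyp]
  show "f 0 = \<kappa>"
    using eq[of 0] by simp
  fix t :: real
  assume "t \<ge> 0"
  have "continuous_on {0..} (\<lambda>s. r s - a * f s)"
    by (auto intro!: continuous_intros cf cr)
  from has_real_derivative_integral_halfline[OF this \<open>t \<ge> 0\<close>]
  have "((\<lambda>t. \<kappa> + integral {0..t} (\<lambda>s. r s - a * f s)) has_real_derivative (r t - a * f t))
      (at t within {0..})"
    by (auto intro: derivative_eq_intros)
  then show "(f has_real_derivative (r t - a * f t)) (at t within {0..})"
    by (rule has_field_derivative_transform_within[OF _ zero_less_one]) (use \<open>t \<ge> 0\<close> eq in auto)
qed

lemma cfun_dfun_Suc:
  fixes \<xi> :: complex
  assumes a: "\<xi> + 8 * of_nat (Suc j) + 10 \<noteq> 0" and b: "\<xi> + 8 * of_nat (Suc j) + 13 \<noteq> 0"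
  shows "(\<xi> + 8 * of_nat (Suc j) + 10) * cfun (Suc j) \<xi> = 8 * of_nat j * cfun j \<xi> + 10 * dfun j \<xi>"
    and "(\<xi> + 8 * of_nat (Suc j) + 13) * dfun (Suc j) \<xi> = 13 * cfun (Suc j) \<xi> + 8 * of_nat j * dfun j \<xi>"
proof -
  have c: "cfun (Suc j) \<xi> = (8 * of_nat j * cfun j \<xi> + 10 * dfun j \<xi>) / (\<xi> + 8 * of_nat (Suc j) + 10)"
    using a b by (simp add: cfun_def dfun_def Let_def add_ac)
  then show "(\<xi> + 8 * of_nat (Suc j) + 10) * cfun (Suc j) \<xi> = 8 * of_nat j * cfun j \<xi> + 10 * dfun j \<xi>"
    using a by simp
  have "dfun (Suc j) \<xi> = (13 * cfun (Suc j) \<xi> + 8 * of_nat j * dfun j \<xi>) / (\<xi> + 8 * of_nat (Suc j) + 13)"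
    unfolding c using a b by (simp add: cfun_def dfun_def Let_def add_ac field_simps)
  then show "(\<xi> + 8 * of_nat (Suc j) + 13) * dfun (Suc j) \<xi> = 13 * cfun (Suc j) \<xi> + 8 * of_nat j * dfun j \<xi>"
    using b by simp
qed

text \<open>The shifts at
  \<open>j = 0\<close> (\<open>c\<^sub>0/d\<^sub>0 - 1\<close> instead of \<open>c\<^sub>0/d\<^sub>0\<close>, and \<open>0\<close> instead of \<open>1\<close>) produce the
  inhomogeneity \<open>10\<close> in the relation for \<open>j = 1\<close>, i.e. the initial value \<open>cr 1 0 = 10\<close>.\<close>

definition c_laplace :: "nat \<Rightarrow> real \<Rightarrow> real" where
  "c_laplace j x = Re (cfun j (of_real x) / dfun 0 (of_real x)) - (if j = 0 then 1 else 0)"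

definition d_laplace :: "nat \<Rightarrow> real \<Rightarrow> real" where
  "d_laplace j x = (if j = 0 then 0 else Re (dfun j (of_real x) / dfun 0 (of_real x)))"

lemma cfun_dfun_0_of_real:
  fixes x :: real
  assumes "x > - 10"
  shows "dfun 0 (of_real x) \<noteq> 0" and "cfun 0 (of_real x) / dfun 0 (of_real x) = of_real ((x + 13) / (x + 23))"
proof -
  have d: "dfun 0 (of_real x) = of_real ((x + 23) / ((x + 13) * (x + 10)))"
    by (simp add: dfun_def)
  then show "dfun 0 (of_real x) \<noteq> 0"
    unfolding d of_real_eq_0_iff using assms by simp
  have r: "1 / (x + 10) / ((x + 23) / ((x + 13) * (x + 10))) = (x + 13) / (x + 23)"
    using assms by (simp add: divide_simps)
  have "cfun 0 (of_real x) = of_real (1 / (x + 10))"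
    by (simp add: cfun_def)
  then show "cfun 0 (of_real x) / dfun 0 (of_real x) = of_real ((x + 13) / (x + 23))"
    unfolding d r[symmetric] by (simp only: of_real_divide)
qed

lemma c_laplace_0:
  assumes "x > - 10"
  shows "(x + 23) * c_laplace 0 x = - 10"
  using assms by (simp add: c_laplace_def cfun_dfun_0_of_real field_simps)

lemma Re_div_dfun_0:
  assumes "x > - 10"
  shows "Re (cfun j (of_real x) / dfun 0 (of_real x)) = c_laplace j x + (if j = 0 then 1 else 0)"
    and "Re (dfun j (of_real x) / dfun 0 (of_real x)) = d_laplace j x + (if j = 0 then 1 else 0)"
  using cfun_dfun_0_of_real(1)[OF assms] by (simp_all add: c_laplace_def d_laplace_def)

lemma cfun_dfun_Suc_of_real:
  fixes x :: real
  assumes "x > - 10"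
  shows "of_real (x + (8 * real (Suc j) + 10)) * cfun (Suc j) (of_real x) =
      8 * of_nat j * cfun j (of_real x) + 10 * dfun j (of_real x)"
    and "of_real (x + (8 * real (Suc j) + 13)) * dfun (Suc j) (of_real x) =
      13 * cfun (Suc j) (of_real x) + 8 * of_nat j * dfun j (of_real x)"
proof -
  have ea: "of_real x + 8 * of_nat (Suc j) + 10 = complex_of_real (x + (8 * real (Suc j) + 10))"
    and eb: "of_real x + 8 * of_nat (Suc j) + 13 = complex_of_real (x + (8 * real (Suc j) + 13))"
    by simp_all
  have "real j \<ge> 0"
    by simp
  then have "complex_of_real (x + (8 * real (Suc j) + 10)) \<noteq> 0"
    and "complex_of_real (x + (8 * real (Suc j) + 13)) \<noteq> 0"
    unfolding of_real_eq_0_iff using assms by auto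
  then show "of_real (x + (8 * real (Suc j) + 10)) * cfun (Suc j) (of_real x) =
      8 * of_nat j * cfun j (of_real x) + 10 * dfun j (of_real x)"
    and "of_real (x + (8 * real (Suc j) + 13)) * dfun (Suc j) (of_real x) =
      13 * cfun (Suc j) (of_real x) + 8 * of_nat j * dfun j (of_real x)"
    using cfun_dfun_Suc[of "of_real x" j] unfolding ea eb by blast+
qed

lemma c_laplace_Suc:
  assumes "x > - 10"
  shows "(x + (8 * real (Suc j) + 10)) * c_laplace (Suc j) x =
    8 * real j * c_laplace j x + 10 * d_laplace j x + (if j = 0 then 10 else 0)"
proof -
  define u where "u i = cfun i (of_real x) / dfun 0 (of_real x)" for i
  define v where "v i = dfun i (of_real x) / dfun 0 (of_real x)" for i
  have "of_real (x + (8 * real (Suc j) + 10)) * u (Suc j) = 8 * of_nat j * u j + 10 * v j"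
    using cfun_dfun_Suc_of_real(1)[OF assms, of j] by (simp add: u_def v_def add_divide_distrib)
  from arg_cong[where f = Re, OF this]
  have "(x + (8 * real (Suc j) + 10)) * Re (u (Suc j)) = 8 * real j * Re (u j) + 10 * Re (v j)"
    by simp
  then show ?thesis
    using Re_div_dfun_0[OF assms] by (simp add: u_def v_def algebra_simps)
qed

lemma d_laplace_Suc:
  assumes "x > - 10"
  shows "(x + (8 * real (Suc j) + 13)) * d_laplace (Suc j) x =
    13 * c_laplace (Suc j) x + 8 * real j * d_laplace j x"
proof -
  define u where "u i = cfun i (of_real x) / dfun 0 (of_real x)" for i
  define v where "v i = dfun i (of_real x) / dfun 0 (of_real x)" for i
  have "of_real (x + (8 * real (Suc j) + 13)) * v (Suc j) = 13 * u (Suc j) + 8 * of_nat j * v j"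
    using cfun_dfun_Suc_of_real(2)[OF assms, of j] by (simp add: u_def v_def add_divide_distrib)
  from arg_cong[where f = Re, OF this]
  have "(x + (8 * real (Suc j) + 13)) * Re (v (Suc j)) = 13 * Re (u (Suc j)) + 8 * real j * Re (v j)"
    by simp
  then show ?thesis
    using Re_div_dfun_0[OF assms] by (simp add: u_def v_def algebra_simps)
qed

section \<open>Truncated series\<close>

lemma has_real_derivative_inverse_power_one_plus_square:
  fixes c \<gamma> :: real
  shows "((\<lambda>g. c / (1 + g\<^sup>2) ^ j) has_real_derivative (- 2 * real j * \<gamma> * c / (1 + \<gamma>\<^sup>2) ^ (j + 1)))
    (at \<gamma> within S)"
proof -
  define q where "q = 1 + \<gamma>\<^sup>2"
  have "q \<noteq> 0"
    unfolding q_def by (metis add_pos_nonneg zero_less_one zero_le_power2 less_irrefl)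
  have "((\<lambda>g. c / (1 + g\<^sup>2) ^ j) has_real_derivative
      - (c * (real j * q ^ (j - 1) * (2 * \<gamma>)) / (q ^ j * q ^ j))) (at \<gamma> within S)"
    using \<open>q \<noteq> 0\<close> unfolding q_def by (auto intro!: derivative_eq_intros simp: power2_eq_square)
  moreover have "- (c * (real j * q ^ (j - 1) * (2 * \<gamma>)) / (q ^ j * q ^ j)) = - 2 * real j * \<gamma> * c / q ^ (j + 1)"
  proof (cases j)
    case (Suc i)
    have e1: "q ^ j * q ^ j = q ^ i * q ^ (j + 1)"
      unfolding Suc by (simp flip: power_add)
    have e2: "c * (real j * q ^ (j - 1) * (2 * \<gamma>)) = q ^ i * (2 * real j * \<gamma> * c)"
      unfolding Suc by (simp add: algebra_simps)
    show ?thesis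
      unfolding e1 e2 using \<open>q \<noteq> 0\<close> by simp
  qed simp
  ultimately show ?thesis
    by (simp add: q_def)
qed

text \<open>The operator \<open>\<partial>\<^sub>t - 4\<gamma>\<partial>\<^sub>\<gamma>\<close> maps \<open>f(t) / q\<^sup>j\<close>, \<open>q = 1 + \<gamma>\<^sup>2\<close>, to
  \<open>(f' + 8 j f) / q\<^sup>j - 8 j f / q\<^sup>j\<^sup>+\<^sup>1\<close>, so a recursion of the coefficients across
  \<open>j - 1 \<mapsto> j\<close> makes the truncated series telescope.\<close>

lemma transport_inverse_power_term:
  fixes \<gamma> p a f g h k j :: real
  assumes "p \<noteq> 0"
  shows "a / p - 4 * \<gamma> * (- 2 * j * \<gamma> * f / ((1 + \<gamma>\<^sup>2) * p)) + k * (f / p) + g / p + h / ((1 + \<gamma>\<^sup>2) * p)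
       = (a + (8 * j + k) * f + g) / p - (8 * j * f - h) / ((1 + \<gamma>\<^sup>2) * p)"
proof -
  have "1 + \<gamma>\<^sup>2 > 0"
    by (simp add: add_pos_nonneg)
  then show ?thesis
    using assms by (simp add: divide_simps) (simp add: algebra_simps power2_eq_square)
qed

lemma transport_truncated_series_telescope:
  fixes f f' g h :: "nat \<Rightarrow> real" and \<gamma> k :: real
  defines "q \<equiv> 1 + \<gamma>\<^sup>2"
  assumes rec: "\<And>j. 1 \<le> j \<Longrightarrow> j \<le> M \<Longrightarrow>
      f' j + (8 * real j + k) * f j + g j = 8 * real (j - 1) * f (j - 1) - h (j - 1)"
  shows "(\<Sum>j\<le>M. f' j / q ^ j) - 4 * \<gamma> * (\<Sum>j\<le>M. - 2 * real j * \<gamma> * f j / q ^ (j + 1))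
      + k * (\<Sum>j\<le>M. f j / q ^ j) + (\<Sum>j\<le>M. g j / q ^ j) + (\<Sum>j\<le>M. h j / q ^ (j + 1))
    = f' 0 + k * f 0 + g 0 - (8 * real M * f M - h M) / q ^ (M + 1)"
proof -
  define X where "X j = f' j + (8 * real j + k) * f j + g j" for j
  define Y where "Y j = 8 * real j * f j - h j" for j
  have "q > 0"
    unfolding q_def by (simp add: add_pos_nonneg)
  have "f' j / q ^ j - 4 * \<gamma> * (- 2 * real j * \<gamma> * f j / q ^ (j + 1)) + k * (f j / q ^ j)
      + g j / q ^ j + h j / q ^ (j + 1) = X j / q ^ j - Y j / q ^ Suc j" (is "?term j = _") for j
  proof -
    have "q ^ (j + 1) = (1 + \<gamma>\<^sup>2) * q ^ j" "q ^ Suc j = (1 + \<gamma>\<^sup>2) * q ^ j"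
      by (simp_all add: q_def)
    then show ?thesis
      unfolding X_def Y_def using \<open>q > 0\<close> by (simp only:) (rule transport_inverse_power_term; simp)
  qed
  then have "(\<Sum>j\<le>M. X j / q ^ j - Y j / q ^ Suc j) = (\<Sum>j\<le>M. ?term j)"
    by simp
  also have "\<dots> = (\<Sum>j\<le>M. f' j / q ^ j) - 4 * \<gamma> * (\<Sum>j\<le>M. - 2 * real j * \<gamma> * f j / q ^ (j + 1))
      + k * (\<Sum>j\<le>M. f j / q ^ j) + (\<Sum>j\<le>M. g j / q ^ j) + (\<Sum>j\<le>M. h j / q ^ (j + 1))"
    by (simp only: sum.distrib sum_subtractf sum_distrib_left)
  finally have "\<dots> = (\<Sum>j\<le>M. X j / q ^ j - Y j / q ^ Suc j)"
    by (rule sym)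
  also have "\<dots> = X 0 - Y M / q ^ Suc M"
  proof -
    have XY: "X j = Y (j - 1)" if "1 \<le> j" "j \<le> M" for j
      using rec[OF that] unfolding X_def Y_def by simp
    have "(\<Sum>j\<le>n. X j / q ^ j - Y j / q ^ Suc j) = X 0 - Y n / q ^ Suc n" if "n \<le> M" for n
      using that
    proof (induction n)
      case (Suc n)
      then show ?case
        using XY[of "Suc n"] by simp
    qed simp
    then show ?thesis
      by simp
  qed
  finally show ?thesis
    by (simp add: X_def Y_def)
qed

locale inverse_laplace_coefficients =
  fixes cr dr :: "nat \<Rightarrow> real \<Rightarrow> real"
  assumes cr_0: "is_inverse_laplace (cr 0) (\<lambda>\<xi>. cfun 0 \<xi> / dfun 0 \<xi> - 1)"
    and dr_0: "\<forall>t\<ge>0. dr 0 t = 0"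
    and cr_pos: "\<forall>j\<ge>1. is_inverse_laplace (cr j) (\<lambda>\<xi>. cfun j \<xi> / dfun 0 \<xi>)"
    and dr_pos: "\<forall>j\<ge>1. is_inverse_laplace (dr j) (\<lambda>\<xi>. dfun j \<xi> / dfun 0 \<xi>)"
begin

lemma continuous_on_cr: "continuous_on {0..} (cr j)"
  using cr_0 cr_pos by (cases j) (auto simp: is_inverse_laplace_def)

lemma continuous_on_dr: "continuous_on {0..} (dr j)"
proof (cases j)
  case 0
  then show ?thesis
    using dr_0 by (auto intro: continuous_on_eq[OF continuous_on_const])
qed (use dr_pos in \<open>auto simp: is_inverse_laplace_def\<close>)

lemma has_laplace_cr: "\<forall>\<^sub>F x in at_top. has_laplace (cr j) x (c_laplace j x)"
proof (cases j)
  case 0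
  then show ?thesis
    using is_inverse_laplace_imp_has_laplace[OF cr_0] by (simp add: c_laplace_def)
next
  case (Suc i)
  then have "is_inverse_laplace (cr j) (\<lambda>\<xi>. cfun j \<xi> / dfun 0 \<xi>)"
    using cr_pos by simp
  from is_inverse_laplace_imp_has_laplace[OF this] show ?thesis
    using Suc by (simp add: c_laplace_def)
qed

lemma has_laplace_dr: "\<forall>\<^sub>F x in at_top. has_laplace (dr j) x (d_laplace j x)"
proof (cases j)
  case 0
  have "has_laplace (dr 0) x 0" for x
  proof -
    have "integral {0..T} (\<lambda>t. exp (- (x * t)) * dr 0 t) = integral {0..T} (\<lambda>t. 0)" for T
      using dr_0 by (intro integral_cong) auto
    then show ?thesis
      unfolding has_laplace_def by simp
  qed
  then show ?thesis
    using 0 by (simp add: d_laplace_def)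
next
  case (Suc i)
  then have "is_inverse_laplace (dr j) (\<lambda>\<xi>. dfun j \<xi> / dfun 0 \<xi>)"
    using dr_pos by simp
  from is_inverse_laplace_imp_has_laplace[OF this] show ?thesis
    using Suc by (simp add: d_laplace_def)
qed

lemma cr_0_eq:
  assumes "t \<ge> 0"
  shows "cr 0 t = - 10 * exp (- (23 * t))"
proof -
  have "\<forall>\<^sub>F x in at_top. has_laplace (cr 0) x (c_laplace 0 x) \<and> has_laplace (\<lambda>_. 0) x 0 \<and>
      (x + 23) * c_laplace 0 x = 0 + - 10"
    using has_laplace_cr[of 0] eventually_gt_at_top[of 0]
    by eventually_elim (use has_laplace_const[of _ 0] c_laplace_0 in auto)
  note ode = laplace_relation_imp_linear_ode[OF continuous_on_cr continuous_on_const this]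
  show ?thesis
    using linear_ode_homogeneous_solution[OF ode(2) assms] ode(1) by simp
qed

lemma cr_0_has_derivative:
  assumes "t \<ge> 0"
  shows "(cr 0 has_real_derivative - 23 * cr 0 t) (at t within {0..})"
proof -
  have "((\<lambda>t. - 10 * exp (- (23 * t))) has_real_derivative - 23 * cr 0 t) (at t within {0..})"
    using cr_0_eq[OF assms] by (auto intro!: derivative_eq_intros)
  then show ?thesis
    by (rule has_field_derivative_transform_within[OF _ zero_less_one]) (use assms cr_0_eq in auto)
qed

lemma cr_Suc_has_derivative:
  assumes "t \<ge> 0"
  shows "(cr (Suc j) has_real_derivative
    8 * real j * cr j t + 10 * dr j t - (8 * real (Suc j) + 10) * cr (Suc j) t) (at t within {0..})"
proof -
  have cont: "continuous_on {0..} (\<lambda>s. 8 * real j * cr j s + 10 * dr j s)"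
    by (intro continuous_intros continuous_on_cr continuous_on_dr)
  have lin: "has_laplace (\<lambda>s. 8 * real j * cr j s + 10 * dr j s) x (8 * real j * c_laplace j x + 10 * d_laplace j x)"
    if "has_laplace (cr j) x (c_laplace j x)" "has_laplace (dr j) x (d_laplace j x)" for x
    using has_laplace_add[OF has_laplace_cmult[OF that(1)] has_laplace_cmult[OF that(2)]]
    by (simp add: continuous_intros continuous_on_cr continuous_on_dr)
  have "\<forall>\<^sub>F x in at_top. has_laplace (cr (Suc j)) x (c_laplace (Suc j) x) \<and>
      has_laplace (\<lambda>s. 8 * real j * cr j s + 10 * dr j s) x (8 * real j * c_laplace j x + 10 * d_laplace j x) \<and>
      (x + (8 * real (Suc j) + 10)) * c_laplace (Suc j) x =
        8 * real j * c_laplace j x + 10 * d_laplace j x + (if j = 0 then 10 else 0)"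
    using has_laplace_cr[of "Suc j"] has_laplace_cr[of j] has_laplace_dr[of j] eventually_gt_at_top[of 0]
    by eventually_elim (intro conjI lin c_laplace_Suc; simp)
  from laplace_relation_imp_linear_ode(2)[OF continuous_on_cr cont this assms] show ?thesis .
qed

lemma dr_Suc_has_derivative:
  assumes "t \<ge> 0"
  shows "(dr (Suc j) has_real_derivative
    13 * cr (Suc j) t + 8 * real j * dr j t - (8 * real (Suc j) + 13) * dr (Suc j) t) (at t within {0..})"
proof -
  have cont: "continuous_on {0..} (\<lambda>s. 13 * cr (Suc j) s + 8 * real j * dr j s)"
    by (intro continuous_intros continuous_on_cr continuous_on_dr)
  have lin: "has_laplace (\<lambda>s. 13 * cr (Suc j) s + 8 * real j * dr j s) x
      (13 * c_laplace (Suc j) x + 8 * real j * d_laplace j x)"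
    if "has_laplace (cr (Suc j)) x (c_laplace (Suc j) x)" "has_laplace (dr j) x (d_laplace j x)" for x
    using has_laplace_add[OF has_laplace_cmult[OF that(1)] has_laplace_cmult[OF that(2)]]
    by (simp add: continuous_intros continuous_on_cr continuous_on_dr)
  have rel: "(x + (8 * real (Suc j) + 13)) * d_laplace (Suc j) x =
      13 * c_laplace (Suc j) x + 8 * real j * d_laplace j x + 0" if "x > 0" for x
    using d_laplace_Suc[of x j] that by simp
  have "\<forall>\<^sub>F x in at_top. has_laplace (dr (Suc j)) x (d_laplace (Suc j) x) \<and>
      has_laplace (\<lambda>s. 13 * cr (Suc j) s + 8 * real j * dr j s) x
        (13 * c_laplace (Suc j) x + 8 * real j * d_laplace j x) \<and>
      (x + (8 * real (Suc j) + 13)) * d_laplace (Suc j) x =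
        13 * c_laplace (Suc j) x + 8 * real j * d_laplace j x + 0"
    using has_laplace_dr[of "Suc j"] has_laplace_cr[of "Suc j"] has_laplace_dr[of j]
      eventually_gt_at_top[of 0]
    by eventually_elim (intro conjI lin rel; simp)
  from laplace_relation_imp_linear_ode(2)[OF continuous_on_dr cont this assms] show ?thesis .
qed

lemma exp_bounded_cr_dr: "exp_bounded 2 (cr j) \<and> exp_bounded 2 (dr j)"
proof (induction j)
  case 0
  have "\<bar>cr 0 t\<bar> \<le> 10 * exp (- (2 * t))" if "t \<ge> 0" for t
    using cr_0_eq[OF that] that by simp
  then have "exp_bounded 2 (cr 0)"
    unfolding exp_bounded_def by blast
  moreover have "exp_bounded 2 (dr 0)"
    unfolding exp_bounded_def using dr_0 by (intro exI[of _ 0]) simp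
  ultimately show ?case ..
next
  case (Suc j)
  then have r\<^sub>1: "exp_bounded 2 (\<lambda>s. 8 * real j * cr j s + 10 * dr j s)"
    by (intro exp_bounded_add exp_bounded_cmult) auto
  have "exp_bounded 2 (cr (Suc j))"
    by (rule linear_ode_exp_bounded[OF cr_Suc_has_derivative _ r\<^sub>1]) simp_all
  with Suc have r\<^sub>2: "exp_bounded 2 (\<lambda>s. 13 * cr (Suc j) s + 8 * real j * dr j s)"
    by (intro exp_bounded_add exp_bounded_cmult) auto
  have "exp_bounded 2 (dr (Suc j))"
    by (rule linear_ode_exp_bounded[OF dr_Suc_has_derivative _ r\<^sub>2]) simp_all
  with \<open>exp_bounded 2 (cr (Suc j))\<close> show ?case ..
qed

definition cr_deriv :: "nat \<Rightarrow> real \<Rightarrow> real" where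
  "cr_deriv j t = (if j = 0 then - 23 * cr 0 t
    else 8 * real (j - 1) * cr (j - 1) t + 10 * dr (j - 1) t - (8 * real j + 10) * cr j t)"

definition dr_deriv :: "nat \<Rightarrow> real \<Rightarrow> real" where
  "dr_deriv j t = (if j = 0 then 0
    else 13 * cr j t + 8 * real (j - 1) * dr (j - 1) t - (8 * real j + 13) * dr j t)"

lemma cr_has_derivative:
  assumes "t \<ge> 0"
  shows "(cr j has_real_derivative cr_deriv j t) (at t within {0..})"
  using cr_0_has_derivative[OF assms] cr_Suc_has_derivative[OF assms]
  by (cases j) (simp_all add: cr_deriv_def)

lemma dr_has_derivative:
  assumes "t \<ge> 0"
  shows "(dr j has_real_derivative dr_deriv j t) (at t within {0..})"
proof (cases j)
  case 0
  then show ?thesis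
    using dr_0 assms by (auto simp: dr_deriv_def
        intro!: has_field_derivative_transform_within[OF DERIV_const zero_less_one])
qed (use dr_Suc_has_derivative[OF assms] in \<open>simp add: dr_deriv_def\<close>)

lemma transport_cr_series:
  fixes \<gamma> :: real
  assumes "t \<ge> 0"
  defines "q \<equiv> 1 + \<gamma>\<^sup>2"
  shows "(\<Sum>j\<le>M. cr_deriv j t / q ^ j) - 4 * \<gamma> * (\<Sum>j\<le>M. - 2 * real j * \<gamma> * cr j t / q ^ (j + 1))
      + 10 * (\<Sum>j\<le>M. cr j t / q ^ j) - 10 / q * (\<Sum>j\<le>M. dr j t / q ^ j)
    = 130 * exp (- 23 * t) - (8 * real M * cr M t + 10 * dr M t) / q ^ (M + 1)"
proof -
  have "(\<Sum>j\<le>M. cr_deriv j t / q ^ j) - 4 * \<gamma> * (\<Sum>j\<le>M. - 2 * real j * \<gamma> * cr j t / q ^ (j + 1))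
    + 10 * (\<Sum>j\<le>M. cr j t / q ^ j) + (\<Sum>j\<le>M. 0 / q ^ j) + (\<Sum>j\<le>M. - 10 * dr j t / q ^ (j + 1))
    = cr_deriv 0 t + 10 * cr 0 t + 0 - (8 * real M * cr M t - - 10 * dr M t) / q ^ (M + 1)"
    unfolding q_def by (rule transport_truncated_series_telescope) (auto simp: cr_deriv_def algebra_simps)
  moreover have "(\<Sum>j\<le>M. - 10 * dr j t / q ^ (j + 1)) = - (10 / q * (\<Sum>j\<le>M. dr j t / q ^ j))"
    by (simp add: sum_distrib_left sum_negf field_simps)
  moreover have "cr_deriv 0 t + 10 * cr 0 t = 130 * exp (- 23 * t)"
    using cr_0_eq[OF \<open>t \<ge> 0\<close>] by (simp add: cr_deriv_def)
  ultimately show ?thesis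
    by simp
qed

lemma transport_dr_series:
  fixes \<gamma> :: real
  assumes "t \<ge> 0"
  defines "q \<equiv> 1 + \<gamma>\<^sup>2"
  shows "(\<Sum>j\<le>M. dr_deriv j t / q ^ j) - 4 * \<gamma> * (\<Sum>j\<le>M. - 2 * real j * \<gamma> * dr j t / q ^ (j + 1))
      + 13 * (\<Sum>j\<le>M. dr j t / q ^ j) - 13 * (\<Sum>j\<le>M. cr j t / q ^ j)
    = 130 * exp (- 23 * t) - 8 * real M * dr M t / q ^ (M + 1)"
proof -
  have "(\<Sum>j\<le>M. dr_deriv j t / q ^ j) - 4 * \<gamma> * (\<Sum>j\<le>M. - 2 * real j * \<gamma> * dr j t / q ^ (j + 1))
    + 13 * (\<Sum>j\<le>M. dr j t / q ^ j) + (\<Sum>j\<le>M. - 13 * cr j t / q ^ j) + (\<Sum>j\<le>M. 0 / q ^ (j + 1))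
    = dr_deriv 0 t + 13 * dr 0 t + - 13 * cr 0 t - (8 * real M * dr M t - 0) / q ^ (M + 1)"
    unfolding q_def by (rule transport_truncated_series_telescope) (auto simp: dr_deriv_def algebra_simps)
  moreover have "(\<Sum>j\<le>M. - 13 * cr j t / q ^ j) = - (13 * (\<Sum>j\<le>M. cr j t / q ^ j))"
    by (simp add: sum_distrib_left sum_negf)
  moreover have "dr_deriv 0 t + 13 * dr 0 t + - 13 * cr 0 t = 130 * exp (- 23 * t)"
    using cr_0_eq[OF \<open>t \<ge> 0\<close>] dr_0 \<open>t \<ge> 0\<close> by (simp add: dr_deriv_def)
  ultimately show ?thesis
    by simp
qed

lemma truncation_error_equations:
  fixes w1 w2 :: "real \<Rightarrow> real \<Rightarrow> real"
  assumes "t \<ge> 0"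
    and w1_t: "((\<lambda>s. w1 s \<gamma>) has_real_derivative w1t) (at t within {0..})"
    and w1_g: "((\<lambda>g. w1 t g) has_real_derivative w1g) (at \<gamma> within {0..})"
    and w2_t: "((\<lambda>s. w2 s \<gamma>) has_real_derivative w2t) (at t within {0..})"
    and w2_g: "((\<lambda>g. w2 t g) has_real_derivative w2g) (at \<gamma> within {0..})"
    and pde1: "w1t - 4 * \<gamma> * w1g + 10 * w1 t \<gamma> - 10 / (1 + \<gamma>\<^sup>2) * w2 t \<gamma> = 130 * exp (- 23 * t)"
    and pde2: "w2t - 4 * \<gamma> * w2g + 13 * w2 t \<gamma> - 13 * w1 t \<gamma> = 130 * exp (- 23 * t)"
  shows "\<exists>\<alpha>t \<alpha>g \<beta>t \<beta>g.
      ((\<lambda>s. w1 s \<gamma> - (\<Sum>j\<le>M. cr j s / (1 + \<gamma>\<^sup>2) ^ j)) has_real_derivative \<alpha>t) (at t within {0..}) \<and>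
      ((\<lambda>g. w1 t g - (\<Sum>j\<le>M. cr j t / (1 + g\<^sup>2) ^ j)) has_real_derivative \<alpha>g) (at \<gamma> within {0..}) \<and>
      ((\<lambda>s. w2 s \<gamma> - (\<Sum>j\<le>M. dr j s / (1 + \<gamma>\<^sup>2) ^ j)) has_real_derivative \<beta>t) (at t within {0..}) \<and>
      ((\<lambda>g. w2 t g - (\<Sum>j\<le>M. dr j t / (1 + g\<^sup>2) ^ j)) has_real_derivative \<beta>g) (at \<gamma> within {0..}) \<and>
      \<alpha>t - 4 * \<gamma> * \<alpha>g + 10 * (w1 t \<gamma> - (\<Sum>j\<le>M. cr j t / (1 + \<gamma>\<^sup>2) ^ j))
        - 10 / (1 + \<gamma>\<^sup>2) * (w2 t \<gamma> - (\<Sum>j\<le>M. dr j t / (1 + \<gamma>\<^sup>2) ^ j))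
        = (8 * real M * cr M t + 10 * dr M t) / (1 + \<gamma>\<^sup>2) ^ (M + 1) \<and>
      \<beta>t - 4 * \<gamma> * \<beta>g + 13 * (w2 t \<gamma> - (\<Sum>j\<le>M. dr j t / (1 + \<gamma>\<^sup>2) ^ j))
        - 13 * (w1 t \<gamma> - (\<Sum>j\<le>M. cr j t / (1 + \<gamma>\<^sup>2) ^ j))
        = 8 * real M * dr M t / (1 + \<gamma>\<^sup>2) ^ (M + 1)"
proof -
  define q where "q = 1 + \<gamma>\<^sup>2"
  have
    "((\<lambda>s. w1 s \<gamma> - (\<Sum>j\<le>M. cr j s / q ^ j)) has_real_derivative
        w1t - (\<Sum>j\<le>M. cr_deriv j t / q ^ j)) (at t within {0..})"
    "((\<lambda>g. w1 t g - (\<Sum>j\<le>M. cr j t / (1 + g\<^sup>2) ^ j)) has_real_derivative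
        w1g - (\<Sum>j\<le>M. - 2 * real j * \<gamma> * cr j t / q ^ (j + 1))) (at \<gamma> within {0..})"
    "((\<lambda>s. w2 s \<gamma> - (\<Sum>j\<le>M. dr j s / q ^ j)) has_real_derivative
        w2t - (\<Sum>j\<le>M. dr_deriv j t / q ^ j)) (at t within {0..})"
    "((\<lambda>g. w2 t g - (\<Sum>j\<le>M. dr j t / (1 + g\<^sup>2) ^ j)) has_real_derivative
        w2g - (\<Sum>j\<le>M. - 2 * real j * \<gamma> * dr j t / q ^ (j + 1))) (at \<gamma> within {0..})"
    unfolding q_def
    by (intro DERIV_diff w1_t w1_g w2_t w2_g DERIV_sum DERIV_cdivide has_real_derivative_inverse_power_one_plus_square
        cr_has_derivative[OF \<open>t \<ge> 0\<close>] dr_has_derivative[OF \<open>t \<ge> 0\<close>])+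
  moreover note transport_cr_series[OF \<open>t \<ge> 0\<close>, of \<gamma> M, folded q_def]
    and transport_dr_series[OF \<open>t \<ge> 0\<close>, of \<gamma> M, folded q_def]
  moreover have "w1t - 4 * \<gamma> * w1g + 10 * w1 t \<gamma> - 10 / q * w2 t \<gamma> = 130 * exp (- 23 * t)"
    using pde1 unfolding q_def .
  ultimately show ?thesis
    unfolding q_def[symmetric] using pde2
    by (intro exI conjI) (assumption | simp add: algebra_simps)+
qed

end

(* The error equations are pointwise identities. *)

theorem lemma2p2:
  fixes cr dr :: "nat \<Rightarrow> real \<Rightarrow> real"
    and w1 w2 w1t w1g w2t w2g :: "real \<Rightarrow> real \<Rightarrow> real"
  assumes c0: "is_inverse_laplace (cr 0) (\<lambda>\<xi>. cfun 0 \<xi> / dfun 0 \<xi> - 1)"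
    and d0: "\<forall>t\<ge>0. dr 0 t = 0"
    and cj: "\<forall>j\<ge>1. is_inverse_laplace (cr j) (\<lambda>\<xi>. cfun j \<xi> / dfun 0 \<xi>)"
    and dj: "\<forall>j\<ge>1. is_inverse_laplace (dr j) (\<lambda>\<xi>. dfun j \<xi> / dfun 0 \<xi>)"
    and w1_t: "\<forall>t\<ge>0. \<forall>\<gamma>\<ge>0. ((\<lambda>s. w1 s \<gamma>) has_real_derivative w1t t \<gamma>) (at t within {0..})"
    and w1_g: "\<forall>t\<ge>0. \<forall>\<gamma>\<ge>0. ((\<lambda>g. w1 t g) has_real_derivative w1g t \<gamma>) (at \<gamma> within {0..})"
    and w2_t: "\<forall>t\<ge>0. \<forall>\<gamma>\<ge>0. ((\<lambda>s. w2 s \<gamma>) has_real_derivative w2t t \<gamma>) (at t within {0..})"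
    and w2_g: "\<forall>t\<ge>0. \<forall>\<gamma>\<ge>0. ((\<lambda>g. w2 t g) has_real_derivative w2g t \<gamma>) (at \<gamma> within {0..})"
    and pde1: "\<forall>t\<ge>0. \<forall>\<gamma>\<ge>0. w1t t \<gamma> - 4 * \<gamma> * w1g t \<gamma> + 10 * w1 t \<gamma>
                 - 10 / (1 + \<gamma>\<^sup>2) * w2 t \<gamma> = 130 * exp (- 23 * t)"
    and pde2: "\<forall>t\<ge>0. \<forall>\<gamma>\<ge>0. w2t t \<gamma> - 4 * \<gamma> * w2g t \<gamma> + 13 * w2 t \<gamma>
                 - 13 * w1 t \<gamma> = 130 * exp (- 23 * t)"
    and init1: "\<forall>\<gamma>\<ge>0. w1 0 \<gamma> = - 10 * \<gamma>\<^sup>2 / (1 + \<gamma>\<^sup>2)"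
    and init2: "\<forall>\<gamma>\<ge>0. w2 0 \<gamma> = 0"
  shows "(\<forall>k. ((\<lambda>t. cr k t * exp t) \<longlongrightarrow> 0) at_top \<and>
              ((\<lambda>t. dr k t * exp t) \<longlongrightarrow> 0) at_top) \<and>
         (\<forall>M::nat. M \<ge> 2 \<longrightarrow>
            (let A = (\<lambda>t \<gamma>. \<Sum>j\<le>M. cr j t / (1 + \<gamma>\<^sup>2) ^ j);
                 B = (\<lambda>t \<gamma>. \<Sum>j\<le>M. dr j t / (1 + \<gamma>\<^sup>2) ^ j);
                 \<alpha> = (\<lambda>t \<gamma>. w1 t \<gamma> - A t \<gamma>);
                 \<beta> = (\<lambda>t \<gamma>. w2 t \<gamma> - B t \<gamma>);
                 P = (\<lambda>t. 8 * real M * cr M t + 10 * dr M t);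
                 Q = (\<lambda>t. 8 * real M * dr M t)
             in \<forall>t\<ge>0. \<forall>\<gamma>\<ge>0. \<exists>\<alpha>t \<alpha>g \<beta>t \<beta>g.
                  ((\<lambda>s. \<alpha> s \<gamma>) has_real_derivative \<alpha>t) (at t within {0..}) \<and>
                  ((\<lambda>g. \<alpha> t g) has_real_derivative \<alpha>g) (at \<gamma> within {0..}) \<and>
                  ((\<lambda>s. \<beta> s \<gamma>) has_real_derivative \<beta>t) (at t within {0..}) \<and>
                  ((\<lambda>g. \<beta> t g) has_real_derivative \<beta>g) (at \<gamma> within {0..}) \<and>
                  \<alpha>t - 4 * \<gamma> * \<alpha>g + 10 * \<alpha> t \<gamma> - 10 / (1 + \<gamma>\<^sup>2) * \<beta> t \<gamma>
                    = P t / (1 + \<gamma>\<^sup>2) ^ (M + 1) \<and>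
                  \<beta>t - 4 * \<gamma> * \<beta>g + 13 * \<beta> t \<gamma> - 13 * \<alpha> t \<gamma>
                    = Q t / (1 + \<gamma>\<^sup>2) ^ (M + 1)))"
proof -
  interpret inverse_laplace_coefficients cr dr
    using c0 d0 cj dj by unfold_locales
  show ?thesis
    unfolding Let_def
  proof (intro conjI allI impI)
    show "((\<lambda>t. cr k t * exp t) \<longlongrightarrow> 0) at_top" "((\<lambda>t. dr k t * exp t) \<longlongrightarrow> 0) at_top" for k
      using exp_bounded_cr_dr[of k] by (auto intro: tendsto_mult_exp_if_exp_bounded)
  qed (rule truncation_error_equations[OF _ w1_t[rule_format] w1_g[rule_format] w2_t[rule_format]
        w2_g[rule_format] pde1[rule_format] pde2[rule_format]]; assumption)
qed

end
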